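(* Let $m\ge2$, $K$ an algebraic number field, $a(z)\in K[z]$ monic of degree $m$, $b(z)\in K[z]$ of degree $\le m-1$ with $z^{m-1}$-coefficient $b_{m-1}$, with $a(z)=\prod_{i=1}^m(z-\alpha_i)$, $\alpha_i\in K$ pairwise distinct, $s_i:=b(\alpha_i)/a'(\alpha_i)\in\mathbb{Q}\setminus\mathbb{Z}_{\le-1}$, $b_{m-1}\notin\mathbb{Z}_{<-1}$. Let $v$ be an Archimedean place of $K$ and put $c_v(\boldsymbol\alpha)=\sum_{i=1}^m\mathrm{h}_v(\alpha_i)+m\log|4|_v$. Then, as $n\to\infty$, \[\log\max_{0\le\ell\le m-1}\{\|P_{n,\ell}\|_v\}\le n\,c_v(\boldsymbol\alpha)+o(n).\]
   Context: $P_{n,\ell}(z)=\frac1{n!}(\frac{d}{dz}+\frac{b(z)}{a(z)})^n(a(z)^nz^\ell)$ (operator applied $n$ times; a polynomial). For $R=\sum_kr_kz^k$, $\|R\|_v=\max_k|r_k|_v$. For Archimedean $v$ with embedding $\iota_v$, $|x|_v=|\iota_v(x)|^{[K_v:\mathbb{R}]/[K:\mathbb{Q}]}$; $\mathrm{h}_v(\alpha)=\log\max\{1,|\alpha|_v\}$. $o(n)$ denotes a quantity $g(n)$ with $g(n)/n\to0$. *)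

theory Defs
  imports "HOL-Analysis.Analysis" "HOL-Computational_Algebra.Polynomial"
begin

text \<open>A number field, realised (without loss of generality) as a subfield of the
complex numbers that is finite-dimensional over the rationals.\<close>

definition q_spans :: "complex list \<Rightarrow> complex set \<Rightarrow> bool" where
  "q_spans bs K \<longleftrightarrow> (\<forall>x\<in>K. \<exists>c :: nat \<Rightarrow> complex.
      (\<forall>i. c i \<in> \<rat>) \<and> x = (\<Sum>i<length bs. c i * bs ! i))"

definition number_field :: "complex set \<Rightarrow> bool" where
  "number_field K \<longleftrightarrow> 0 \<in> K \<and> 1 \<in> K \<and>
     (\<forall>x\<in>K. \<forall>y\<in>K. x + y \<in> K \<and> x - y \<in> K \<and> x * y \<in> K) \<and>
     (\<forall>x\<in>K. x \<noteq> 0 \<longrightarrow> inverse x \<in> K) \<and>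
     (\<exists>bs. set bs \<subseteq> K \<and> q_spans bs K)"

text \<open>The degree [K:Q] = minimal size of a Q-spanning family (= dimension).\<close>
definition nf_degree :: "complex set \<Rightarrow> nat" where
  "nf_degree K = (LEAST n. \<exists>bs. length bs = n \<and> set bs \<subseteq> K \<and> q_spans bs K)"

definition field_embedding :: "complex set \<Rightarrow> (complex \<Rightarrow> complex) \<Rightarrow> bool" where
  "field_embedding K \<iota> \<longleftrightarrow> \<iota> 1 = 1 \<and>
     (\<forall>x\<in>K. \<forall>y\<in>K. \<iota> (x + y) = \<iota> x + \<iota> y \<and> \<iota> (x * y) = \<iota> x * \<iota> y)"

text \<open>Local degree [K_v : R] of the Archimedean place v given by the embedding.\<close>
definition local_degree :: "complex set \<Rightarrow> (complex \<Rightarrow> complex) \<Rightarrow> nat" where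
  "local_degree K \<iota> = (if \<iota> ` K \<subseteq> \<real> then 1 else 2)"

definition abs_v :: "complex set \<Rightarrow> (complex \<Rightarrow> complex) \<Rightarrow> complex \<Rightarrow> real" where
  "abs_v K \<iota> x = norm (\<iota> x) powr (real (local_degree K \<iota>) / real (nf_degree K))"

definition h_v :: "complex set \<Rightarrow> (complex \<Rightarrow> complex) \<Rightarrow> complex \<Rightarrow> real" where
  "h_v K \<iota> x = ln (max 1 (abs_v K \<iota> x))"

definition poly_norm_v :: "complex set \<Rightarrow> (complex \<Rightarrow> complex) \<Rightarrow> complex poly \<Rightarrow> real" where
  "poly_norm_v K \<iota> p = Max ((\<lambda>k. abs_v K \<iota> (coeff p k)) ` {0..degree p})"

definition diff_op :: "complex poly \<Rightarrow> complex poly \<Rightarrow> (complex \<Rightarrow> complex) \<Rightarrow> complex \<Rightarrow> complex" where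
  "diff_op a b f = (\<lambda>z. deriv f z + poly b z / poly a z * f z)"

text \<open>P_{n,l}(z) = (1/n!) (d/dz + b/a)^n (a^n z^l), as the polynomial agreeing with
this function away from the zeros of a.\<close>
definition P_poly :: "complex poly \<Rightarrow> complex poly \<Rightarrow> nat \<Rightarrow> nat \<Rightarrow> complex poly" where
  "P_poly a b n l = (THE p. \<forall>z. poly a z \<noteq> 0 \<longrightarrow>
      poly p z = ((diff_op a b ^^ n) (\<lambda>z. poly a z ^ n * z ^ l) z) / fact n)"

end

theory Submission
  imports Defs "HOL-Real_Asymp.Real_Asymp"
begin

(* Conjugating D = d/dz + b/a by powers of a turns it into a purely polynomial operator:
   D (a^c G) = a^(c-1) (c a' G + a G' + b G). Hence n! P_{n,l} is obtained from z^l by n steps of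
   this "twisted derivative", with c decreasing from n. Under the embedding, a splits into the
   linear factors z - beta_i and b into sum_i s_i prod_(j ~= i) (z - beta_j), s_i the residues of
   b/a. A Leibniz rule for the twisted derivative along this factorisation, together with
   |prod_(j<k) (n - j + s)| <= k! 2^(n+S) for |s| <= S, bounds the l1-norm of n! P_{n,l} by
   n! (n+1)^m 2^l 2^(m(n+S)) prod_i (1 + |beta_i|)^n. Since 1 + |beta| <= 2 max(1, |beta|),
   everything except 4^(mn) prod_i max(1, |beta_i|)^n is polynomial in n and contributes o(n)
   after taking logarithms. *)

section \<open>Twisted derivatives of polynomials\<close>

text \<open>With D = d/dz + B/A one has twisted_pderiv A B c G = A^(1-c) D (A^c G), hence
  twisted_pderiv_pow A B k c G = A^(k-c) D^k (A^c G).\<close>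

definition twisted_pderiv :: "'a::idom poly \<Rightarrow> 'a poly \<Rightarrow> 'a \<Rightarrow> 'a poly \<Rightarrow> 'a poly" where
  "twisted_pderiv A B c G = smult c (pderiv A * G) + A * pderiv G + B * G"

fun twisted_pderiv_pow :: "'a::idom poly \<Rightarrow> 'a poly \<Rightarrow> nat \<Rightarrow> 'a \<Rightarrow> 'a poly \<Rightarrow> 'a poly" where
  "twisted_pderiv_pow A B 0 c G = G"
| "twisted_pderiv_pow A B (Suc k) c G = twisted_pderiv A B (c - of_nat k) (twisted_pderiv_pow A B k c G)"

lemma twisted_pderiv_add: "twisted_pderiv A B c (G + H) = twisted_pderiv A B c G + twisted_pderiv A B c H"
  by (simp add: twisted_pderiv_def pderiv_add algebra_simps smult_add_right)

lemma twisted_pderiv_0 [simp]: "twisted_pderiv A B c 0 = 0"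
  by (simp add: twisted_pderiv_def)

lemma twisted_pderiv_sum: "twisted_pderiv A B c (\<Sum>j\<in>S. G j) = (\<Sum>j\<in>S. twisted_pderiv A B c (G j))"
  by (induction S rule: infinite_finite_induct) (simp_all add: twisted_pderiv_add)

lemma twisted_pderiv_of_nat_mult: "twisted_pderiv A B c (of_nat n * G) = of_nat n * twisted_pderiv A B c G"
  by (simp add: twisted_pderiv_def pderiv_mult of_nat_poly algebra_simps pderiv_smult)

lemma pderiv_power_mult_self: "A * pderiv (A ^ p) = smult (of_nat p) (A ^ p * pderiv A)"
proof (cases p)
  case (Suc q)
  show ?thesis unfolding Suc pderiv_power_Suc by (simp add: algebra_simps)
qed simp

lemma twisted_pderiv_mult_term:
  assumes "j \<le> k"
  shows "twisted_pderiv (A1 * A2) (B1 * A2 + A1 * B2) (c - of_nat k) (A1 ^ (k - j) * X * A2 ^ j * Y)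
    = A1 ^ (k - j) * twisted_pderiv A1 B1 (c - of_nat j) X * A2 ^ Suc j * Y
      + A1 ^ Suc (k - j) * X * A2 ^ j * twisted_pderiv A2 B2 (c - of_nat (k - j)) Y"
proof -
  define P Q where "P = A1 ^ (k - j)" and "Q = A2 ^ j"
  define g where "g = [:c - of_nat k:]"
  have P': "A1 * pderiv P = [:of_nat (k - j):] * P * pderiv A1"
    and Q': "A2 * pderiv Q = [:of_nat j:] * Q * pderiv A2"
    unfolding P_def Q_def pderiv_power_mult_self by simp_all
  have "[:c - of_nat j:] = g + [:of_nat (k - j):]" and "[:c - of_nat (k - j):] = g + [:of_nat j:]"
    using assms by (simp_all add: g_def of_nat_diff)
  moreover have smult_eq: "smult x p = [:x:] * p" for x and p :: "'a poly"
    by simp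
  ultimately have "twisted_pderiv (A1 * A2) (B1 * A2 + A1 * B2) (c - of_nat k) (P * X * Q * Y)
      = P * twisted_pderiv A1 B1 (c - of_nat j) X * (A2 * Q) * Y
        + (A1 * P) * X * Q * twisted_pderiv A2 B2 (c - of_nat (k - j)) Y"
    unfolding twisted_pderiv_def smult_eq g_def[symmetric] pderiv_mult
    using P' Q' by algebra
  then show ?thesis by (simp add: P_def Q_def algebra_simps)
qed

lemma sum_binomial_pascal:
  fixes t :: "nat \<Rightarrow> 'a::comm_ring_1"
  shows "(\<Sum>j\<le>k. of_nat (k choose j) * (t (Suc j) + t j)) = (\<Sum>j\<le>Suc k. of_nat (Suc k choose j) * t j)"
proof -
  have "(\<Sum>j\<le>Suc k. of_nat (Suc k choose j) * t j)
      = t 0 + (\<Sum>j\<le>k. of_nat (k choose j) * t (Suc j) + of_nat (k choose Suc j) * t (Suc j))"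
    by (subst sum.atMost_Suc_shift) (simp add: algebra_simps)
  moreover have "(\<Sum>j\<le>k. of_nat (k choose j) * t j) = (\<Sum>j\<le>Suc k. of_nat (k choose j) * t j)"
    by (simp add: binomial_eq_0)
  moreover have "\<dots> = t 0 + (\<Sum>j\<le>k. of_nat (k choose Suc j) * t (Suc j))"
    by (subst sum.atMost_Suc_shift) simp
  ultimately show ?thesis by (simp add: sum.distrib algebra_simps)
qed

lemma twisted_pderiv_pow_mult:
  "twisted_pderiv_pow (A1 * A2) (B1 * A2 + A1 * B2) k c (G1 * G2) =
    (\<Sum>j\<le>k. of_nat (k choose j) *
       (A1 ^ (k - j) * twisted_pderiv_pow A1 B1 j c G1 * A2 ^ j * twisted_pderiv_pow A2 B2 (k - j) c G2))"
proof (induction k)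
  case (Suc k)
  define t where "t j = A1 ^ (Suc k - j) * twisted_pderiv_pow A1 B1 j c G1 * A2 ^ j
    * twisted_pderiv_pow A2 B2 (Suc k - j) c G2" for j
  have "twisted_pderiv_pow (A1 * A2) (B1 * A2 + A1 * B2) (Suc k) c (G1 * G2) =
     (\<Sum>j\<le>k. of_nat (k choose j) * twisted_pderiv (A1 * A2) (B1 * A2 + A1 * B2) (c - of_nat k)
          (A1 ^ (k - j) * twisted_pderiv_pow A1 B1 j c G1 * A2 ^ j * twisted_pderiv_pow A2 B2 (k - j) c G2))"
    by (simp add: Suc twisted_pderiv_sum twisted_pderiv_of_nat_mult)
  also have "\<dots> = (\<Sum>j\<le>k. of_nat (k choose j) * (t (Suc j) + t j))"
    by (intro sum.cong refl) (simp add: twisted_pderiv_mult_term t_def Suc_diff_le)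
  also have "\<dots> = (\<Sum>j\<le>Suc k. of_nat (Suc k choose j) * t j)"
    by (rule sum_binomial_pascal)
  finally show ?case unfolding t_def .
qed simp

lemma twisted_pderiv_pow_linear:
  "twisted_pderiv_pow [:-\<beta>, 1:] [:s:] k c 1 = [:\<Prod>j<k. c - of_nat j + s:]"
  by (induction k) (simp_all add: twisted_pderiv_def pderiv_pCons algebra_simps)

lemma twisted_pderiv_pow_1_0: "twisted_pderiv_pow 1 0 k c G = (pderiv ^^ k) G"
  by (induction k) (simp_all add: twisted_pderiv_def)

lemma higher_pderiv_monom_1:
  "(pderiv ^^ k) (monom 1 l) = monom (of_nat (fact k * (l choose k))) (l - k)"
proof (induction k)
  case (Suc k)
  have "(l - k) * (l choose k) = Suc k * (l choose Suc k)"
    using binomial_absorb_comp[of l k] binomial_absorption[of k l] by simp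
  then have "(l - k) * (fact k * (l choose k)) = fact (Suc k) * (l choose Suc k)"
    by (simp add: algebra_simps)
  then show ?case
    using Suc by (simp add: pderiv_monom flip: of_nat_mult)
qed simp

section \<open>The polynomials P_poly as twisted derivatives\<close>

lemma poly_eqI_off_roots:
  fixes p q :: "'a::{idom, ring_char_0} poly"
  assumes "a \<noteq> 0" and "\<And>z. poly a z \<noteq> 0 \<Longrightarrow> poly p z = poly q z"
  shows "p = q"
proof -
  have "\<forall>z. poly ((p - q) * a) z = 0"
    using assms(2) by auto
  then have "(p - q) * a = 0"
    using poly_all_0_iff_0 by blast
  then show ?thesis
    using assms(1) by simp
qed

lemma diff_op_poly_power_mult:
  assumes "poly a z \<noteq> 0" and "\<forall>\<^sub>F w in nhds z. f w = poly (a ^ Suc N * H) w"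
  shows "diff_op a b f z = poly (a ^ N * twisted_pderiv a b (of_nat (Suc N)) H) z"
proof -
  have "deriv f z = poly (pderiv (a ^ Suc N * H)) z"
    by (rule trans[OF deriv_cong_ev[OF assms(2) refl]]) (rule DERIV_imp_deriv[OF poly_DERIV])
  moreover have "f z = poly (a ^ Suc N * H) z"
    using assms(2) by (rule eventually_nhds_x_imp_x)
  moreover have "pderiv (a ^ Suc N * H) + b * a ^ N * H = a ^ N * twisted_pderiv a b (of_nat (Suc N)) H"
    unfolding pderiv_mult pderiv_power_Suc by (simp add: twisted_pderiv_def algebra_simps)
  then have "poly (pderiv (a ^ Suc N * H)) z + poly b z * poly a z ^ N * poly H z
      = poly (a ^ N * twisted_pderiv a b (of_nat (Suc N)) H) z"
    by (metis poly_add poly_mult poly_power)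
  ultimately show ?thesis
    using assms(1) by (simp add: diff_op_def field_simps)
qed

lemma diff_op_funpow_poly_power_mult:
  assumes "k \<le> n" and "poly a z \<noteq> 0"
  shows "(diff_op a b ^^ k) (\<lambda>w. poly a w ^ n * poly G w) z
    = poly (a ^ (n - k) * twisted_pderiv_pow a b k (of_nat n) G) z"
  using assms
proof (induction k arbitrary: z)
  case (Suc k)
  have "\<forall>\<^sub>F w in nhds z. poly a w \<noteq> 0"
    using Suc.prems(2) by (intro tendsto_imp_eventually_ne) (simp_all add: tendsto_nhds_iff flip: isCont_def)
  then have "\<forall>\<^sub>F w in nhds z. (diff_op a b ^^ k) (\<lambda>w. poly a w ^ n * poly G w) w
      = poly (a ^ Suc (n - Suc k) * twisted_pderiv_pow a b k (of_nat n) G) w"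
    by eventually_elim (use Suc in \<open>simp add: Suc_diff_Suc\<close>)
  then show ?case
    using Suc.prems by (simp add: diff_op_poly_power_mult of_nat_diff)
qed simp

lemma P_poly_eq_twisted_pderiv_pow:
  assumes "a \<noteq> 0"
  shows "P_poly a b n l = smult (1 / fact n) (twisted_pderiv_pow a b n (of_nat n) (monom 1 l))"
  unfolding P_poly_def
proof (rule the_equality)
  have "(\<lambda>z. poly a z ^ n * z ^ l) = (\<lambda>w. poly a w ^ n * poly (monom 1 l) w)"
    by (simp add: poly_monom)
  then show "\<forall>z. poly a z \<noteq> 0 \<longrightarrow> poly (smult (1 / fact n) (twisted_pderiv_pow a b n (of_nat n) (monom 1 l))) z
      = (diff_op a b ^^ n) (\<lambda>z. poly a z ^ n * z ^ l) z / fact n"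
    by (simp add: diff_op_funpow_poly_power_mult)
  then show "p = smult (1 / fact n) (twisted_pderiv_pow a b n (of_nat n) (monom 1 l))"
    if "\<forall>z. poly a z \<noteq> 0 \<longrightarrow> poly p z = (diff_op a b ^^ n) (\<lambda>z. poly a z ^ n * z ^ l) z / fact n" for p
    using that assms by (intro poly_eqI_off_roots[of a]) auto
qed

section \<open>The l1-norm of a polynomial\<close>

definition l1_norm :: "'a::real_normed_vector poly \<Rightarrow> real" where
  "l1_norm p = (\<Sum>i\<le>degree p. norm (coeff p i))"

lemma l1_norm_eq_sum: "degree p \<le> D \<Longrightarrow> l1_norm p = (\<Sum>i\<le>D. norm (coeff p i))"
  unfolding l1_norm_def by (rule sum.mono_neutral_left) (auto simp: coeff_eq_0)

lemma l1_norm_nonneg: "0 \<le> l1_norm p"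
  unfolding l1_norm_def by (simp add: sum_nonneg)

lemma l1_norm_0 [simp]: "l1_norm 0 = 0"
  by (simp add: l1_norm_def)

lemma l1_norm_pCons: "l1_norm (pCons a p) = norm a + l1_norm p"
  using sum.atMost_Suc_shift[of "\<lambda>i. norm (coeff (pCons a p) i)" "degree p"]
  by (simp add: l1_norm_eq_sum[OF degree_pCons_le] l1_norm_def)

lemma l1_norm_monom: "l1_norm (monom a d) = norm a"
proof -
  have "l1_norm (monom a d) = (\<Sum>i\<le>d. if d = i then norm a else 0)"
    unfolding l1_norm_eq_sum[OF degree_monom_le] coeff_monom by (intro sum.cong) auto
  then show ?thesis
    by simp
qed

lemma l1_norm_1 [simp]: "l1_norm (1 :: 'a::real_normed_field poly) = 1"
  by (simp add: l1_norm_def)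

lemma norm_coeff_le_l1_norm: "norm (coeff p i) \<le> l1_norm p"
proof (cases "i \<le> degree p")
  case True
  then show ?thesis
    unfolding l1_norm_def by (intro member_le_sum) auto
qed (simp add: coeff_eq_0 l1_norm_nonneg)

lemma l1_norm_add: "l1_norm (p + q) \<le> l1_norm p + l1_norm q"
proof -
  define D where "D = max (degree p) (degree q)"
  have "l1_norm (p + q) = (\<Sum>i\<le>D. norm (coeff p i + coeff q i))"
    by (simp add: l1_norm_eq_sum[of _ D] D_def degree_add_le)
  also have "\<dots> \<le> (\<Sum>i\<le>D. norm (coeff p i) + norm (coeff q i))"
    by (intro sum_mono norm_triangle_ineq)
  also have "\<dots> = l1_norm p + l1_norm q"
    using l1_norm_eq_sum[of p D] l1_norm_eq_sum[of q D] by (simp add: sum.distrib D_def)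
  finally show ?thesis .
qed

lemma l1_norm_sum: "l1_norm (\<Sum>j\<in>S. f j) \<le> (\<Sum>j\<in>S. l1_norm (f j))"
proof (induction S rule: infinite_finite_induct)
  case (insert x F)
  then show ?case
    using l1_norm_add[of "f x" "sum f F"] by simp
qed simp_all

lemma l1_norm_smult: "l1_norm (smult a p) = norm a * l1_norm (p :: 'a::real_normed_field poly)"
  by (simp add: l1_norm_eq_sum[OF degree_smult_le] l1_norm_def norm_mult sum_distrib_left)

lemma l1_norm_of_nat_mult: "l1_norm (of_nat n * p) = real n * l1_norm (p :: 'a::real_normed_field poly)"
  by (simp add: of_nat_poly l1_norm_smult)

lemma l1_norm_mult: "l1_norm (p * q) \<le> l1_norm p * l1_norm (q :: 'a::real_normed_field poly)"
proof (induction p rule: pCons_induct)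
  case (pCons a p)
  have "l1_norm (pCons a p * q) \<le> l1_norm (smult a q) + l1_norm (pCons 0 (p * q))"
    using l1_norm_add by simp
  also have "\<dots> \<le> norm a * l1_norm q + l1_norm p * l1_norm q"
    using pCons.IH by (simp add: l1_norm_smult l1_norm_pCons)
  finally show ?case
    by (simp add: l1_norm_pCons algebra_simps)
qed simp

lemma l1_norm_mult_le:
  fixes p q :: "'a::real_normed_field poly"
  assumes "l1_norm p \<le> x" and "l1_norm q \<le> y"
  shows "l1_norm (p * q) \<le> x * y"
  using l1_norm_mult[of p q] mult_mono[OF assms order_trans[OF l1_norm_nonneg assms(1)] l1_norm_nonneg]
  by linarith

lemma l1_norm_power: "l1_norm (p ^ k) \<le> l1_norm (p :: 'a::real_normed_field poly) ^ k"
  by (induction k) (simp_all add: l1_norm_mult_le)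

lemma l1_norm_prod: "l1_norm (\<Prod>i\<in>S. f i) \<le> (\<Prod>i\<in>S. l1_norm (f i :: 'a::real_normed_field poly))"
  by (induction S rule: infinite_finite_induct) (simp_all add: l1_norm_mult_le)

section \<open>Partial fractions over distinct nodes\<close>

definition node_poly :: "(nat \<Rightarrow> 'a::comm_ring_1) \<Rightarrow> nat \<Rightarrow> 'a poly" where
  "node_poly \<beta> r = (\<Prod>i<r. [:-\<beta> i, 1:])"

text \<open>pfrac_numer \<beta> s r / node_poly \<beta> r = (\<Sum>i<r. s i / (z - \<beta> i)).\<close>

definition pfrac_numer :: "(nat \<Rightarrow> 'a::comm_ring_1) \<Rightarrow> (nat \<Rightarrow> 'a) \<Rightarrow> nat \<Rightarrow> 'a poly" where
  "pfrac_numer \<beta> s r = (\<Sum>i<r. smult (s i) (\<Prod>j\<in>{..<r} - {i}. [:-\<beta> j, 1:]))"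

lemma node_poly_Suc: "node_poly \<beta> (Suc r) = node_poly \<beta> r * [:-\<beta> r, 1:]"
  by (simp add: node_poly_def)

lemma pfrac_numer_Suc:
  "pfrac_numer \<beta> s (Suc r) = pfrac_numer \<beta> s r * [:-\<beta> r, 1:] + node_poly \<beta> r * [:s r:]"
proof -
  have "{..<Suc r} - {i} = insert r ({..<r} - {i})" if "i < r" for i
    using that by auto
  then have "(\<Sum>i<r. smult (s i) (\<Prod>j\<in>{..<Suc r} - {i}. [:-\<beta> j, 1:]))
      = pfrac_numer \<beta> s r * [:-\<beta> r, 1:]"
    unfolding pfrac_numer_def sum_distrib_right by (intro sum.cong) (simp_all add: algebra_simps)
  moreover have "{..<Suc r} - {r} = {..<r}"
    by auto
  ultimately show ?thesis
    by (simp add: pfrac_numer_def node_poly_def algebra_simps)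
qed

lemma poly_pfrac_numer_node:
  fixes \<beta> :: "nat \<Rightarrow> 'a::idom"
  assumes "i < m"
  shows "poly (pfrac_numer \<beta> s m) (\<beta> i) = s i * poly (\<Prod>j\<in>{..<m} - {i}. [:-\<beta> j, 1:]) (\<beta> i)"
proof -
  have "poly (\<Prod>j\<in>{..<m} - {a}. [:-\<beta> j, 1:]) (\<beta> i) = 0" if "a < m" "a \<noteq> i" for a
    using that assms by (auto simp: poly_prod prod_zero_iff)
  then have "poly (pfrac_numer \<beta> s m) (\<beta> i)
      = (\<Sum>a<m. if a = i then s i * poly (\<Prod>j\<in>{..<m} - {i}. [:-\<beta> j, 1:]) (\<beta> i) else 0)"
    unfolding pfrac_numer_def poly_sum by (intro sum.cong) auto
  then show ?thesis
    using assms by simp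
qed

lemma pderiv_node_poly: "pderiv (node_poly \<beta> m) = pfrac_numer \<beta> (\<lambda>_. 1) m"
  by (simp add: node_poly_def pfrac_numer_def pderiv_prod pderiv_pCons)

lemma degree_pfrac_numer: "degree (pfrac_numer \<beta> s m) \<le> m - 1"
  unfolding pfrac_numer_def
proof (intro degree_sum_le order.trans[OF degree_smult_le])
  fix i assume "i \<in> {..<m}"
  have "degree (\<Prod>j\<in>{..<m} - {i}. [:-\<beta> j, 1:]) \<le> (\<Sum>j\<in>{..<m} - {i}. degree [:-\<beta> j, 1:])"
    using degree_prod_sum_le[of "{..<m} - {i}" "\<lambda>j. [:-\<beta> j, 1:]"] by (simp add: o_def)
  also have "\<dots> = m - 1"
    using \<open>i \<in> {..<m}\<close> by (simp add: card_Diff_singleton)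
  finally show "degree (\<Prod>j\<in>{..<m} - {i}. [:-\<beta> j, 1:]) \<le> m - 1" .
qed simp

lemma pfrac_numer_residues:
  fixes \<beta> :: "nat \<Rightarrow> 'a::field"
  assumes "inj_on \<beta> {..<m}" and "degree b < m"
  shows "pfrac_numer \<beta> (\<lambda>i. poly b (\<beta> i) / poly (pderiv (node_poly \<beta> m)) (\<beta> i)) m = b"
proof (rule poly_eqI_degree[of "\<beta> ` {..<m}"])
  have card: "card (\<beta> ` {..<m}) = m"
    using assms(1) by (simp add: card_image)
  then show "degree b < card (\<beta> ` {..<m})"
    using assms(2) by simp
  have "m - 1 < m"
    using assms(2) by simp
  then show "degree (pfrac_numer \<beta> (\<lambda>i. poly b (\<beta> i) / poly (pderiv (node_poly \<beta> m)) (\<beta> i)) m) < card (\<beta> ` {..<m})"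
    using degree_pfrac_numer card by (metis le_less_trans)
  fix x assume "x \<in> \<beta> ` {..<m}"
  then obtain i where "i < m" and x: "x = \<beta> i"
    by auto
  have "poly (\<Prod>j\<in>{..<m} - {i}. [:-\<beta> j, 1:]) (\<beta> i) \<noteq> 0"
    using assms(1) \<open>i < m\<close> by (auto simp: poly_prod prod_zero_iff dest: inj_onD)
  then show "poly (pfrac_numer \<beta> (\<lambda>i. poly b (\<beta> i) / poly (pderiv (node_poly \<beta> m)) (\<beta> i)) m) x = poly b x"
    using \<open>i < m\<close> by (simp add: x pderiv_node_poly poly_pfrac_numer_node)
qed

section \<open>Coefficient bound for the twisted derivatives\<close>

lemma l1_norm_node_poly:
  fixes \<beta> :: "nat \<Rightarrow> 'a::real_normed_field"
  shows "l1_norm (node_poly \<beta> r) \<le> (\<Prod>i<r. 1 + norm (\<beta> i))"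
  using l1_norm_prod[of "\<lambda>i. [:-\<beta> i, 1:]" "{..<r}"] by (simp add: node_poly_def l1_norm_pCons add.commute)

lemma norm_prod_shift_le:
  fixes s :: "'a::real_normed_field"
  assumes "k \<le> n" and "norm s \<le> real S"
  shows "norm (\<Prod>j<k. of_nat n - of_nat j + s) \<le> fact k * 2 ^ (n + S)"
proof -
  have "norm (\<Prod>j<k. of_nat n - of_nat j + s) \<le> (\<Prod>j<k. real (n + S) - real j)"
    unfolding prod_norm[symmetric]
  proof (intro prod_mono conjI norm_ge_zero)
    fix j assume "j \<in> {..<k}"
    then have "of_nat n - of_nat j = (of_nat (n - j) :: 'a)"
      using assms(1) by (simp add: of_nat_diff)
    then show "norm (of_nat n - of_nat j + s) \<le> real (n + S) - real j"
      using norm_triangle_ineq[of "of_nat (n - j) :: 'a" s] assms \<open>j \<in> {..<k}\<close> by (simp add: of_nat_diff)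
  qed
  also have "\<dots> = fact k * real (n + S choose k)"
    by (simp add: binomial_gbinomial gbinomial_mult_fact atLeast0LessThan)
  also have "\<dots> \<le> fact k * 2 ^ (n + S)"
    using binomial_le_pow2[of "n + S" k] by (intro mult_left_mono) (simp_all flip: of_nat_le_iff)
  finally show ?thesis .
qed

lemma l1_norm_leibniz_term_le:
  fixes A T :: "'a::real_normed_field poly" and x \<sigma> :: 'a
  assumes "j \<le> k" and "k \<le> n" and "norm \<sigma> \<le> real S" and "l1_norm A \<le> Q"
    and "l1_norm T \<le> fact j * real (Suc j) ^ r * 2 ^ l * 2 ^ (r * (n + S)) * Q ^ j"
  shows "l1_norm (of_nat (k choose j) * (A ^ (k - j) * T * [:-x, 1:] ^ j * [:\<Prod>i<k - j. of_nat n - of_nat i + \<sigma>:]))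
    \<le> fact k * real (Suc k) ^ r * 2 ^ l * 2 ^ (Suc r * (n + S)) * (Q * (1 + norm x)) ^ k"
    (is "l1_norm (_ * ?X) \<le> _")
proof -
  define b where "b = 1 + norm x"
  define R where "R i = real (Suc i) ^ r * 2 ^ l * 2 ^ (Suc r * (n + S)) * (Q ^ k * b ^ i)" for i
  have "0 \<le> Q"
    using assms(4) l1_norm_nonneg order_trans by blast
  have "l1_norm (A ^ (k - j)) \<le> Q ^ (k - j)"
    by (rule order_trans[OF l1_norm_power power_mono[OF assms(4) l1_norm_nonneg]])
  moreover have "l1_norm ([:-x, 1:] ^ j) \<le> b ^ j"
    using l1_norm_power[of "[:-x, 1:]" j] by (simp add: b_def l1_norm_pCons add.commute)
  moreover have "l1_norm [:\<Prod>i<k - j. of_nat n - of_nat i + \<sigma>:] \<le> fact (k - j) * 2 ^ (n + S)"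
    using norm_prod_shift_le[of "k - j" n \<sigma> S] assms(1-3) by (simp add: l1_norm_pCons)
  ultimately have "l1_norm ?X \<le> Q ^ (k - j) * (fact j * real (Suc j) ^ r * 2 ^ l * 2 ^ (r * (n + S)) * Q ^ j)
      * b ^ j * (fact (k - j) * 2 ^ (n + S))"
    using assms(5) by (intro l1_norm_mult_le)
  also have "\<dots> = (fact j * fact (k - j)) * R j"
    using assms(1) by (simp add: R_def power_add[symmetric] power_mult_distrib algebra_simps)
  finally have "real (k choose j) * l1_norm ?X \<le> (real (k choose j) * (fact j * fact (k - j))) * R j"
    unfolding mult.assoc by (rule mult_left_mono) simp
  also have "real (k choose j) * (fact j * fact (k - j)) = fact k"
    using binomial_fact_lemma[OF assms(1)] by (metis mult.commute of_nat_fact of_nat_mult)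
  also have "R j \<le> R k"
    unfolding R_def using assms(1) \<open>0 \<le> Q\<close>
    by (intro mult_mono power_mono power_increasing) (simp_all add: b_def)
  then have "fact k * R j \<le> fact k * R k"
    by (rule mult_left_mono) simp
  finally show ?thesis
    unfolding l1_norm_of_nat_mult R_def b_def power_mult_distrib by (simp only: mult_ac)
qed

lemma l1_norm_twisted_pderiv_pow_le:
  fixes \<beta> s :: "nat \<Rightarrow> 'a::real_normed_field"
  assumes "\<forall>i<r. norm (s i) \<le> real S" and "k \<le> n"
  shows "l1_norm (twisted_pderiv_pow (node_poly \<beta> r) (pfrac_numer \<beta> s r) k (of_nat n) (monom 1 l))
    \<le> fact k * real (Suc k) ^ r * 2 ^ l * 2 ^ (r * (n + S)) * (\<Prod>i<r. 1 + norm (\<beta> i)) ^ k"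
  using assms
proof (induction r arbitrary: k)
  case 0
  have "norm (fact k * of_nat (l choose k) :: 'a) = fact k * real (l choose k)"
    by (metis norm_of_nat of_nat_fact of_nat_mult)
  moreover have "real (l choose k) \<le> 2 ^ l"
    using binomial_le_pow2[of l k] by (simp flip: of_nat_le_iff)
  ultimately show ?case
    by (simp add: node_poly_def pfrac_numer_def twisted_pderiv_pow_1_0 higher_pderiv_monom_1 l1_norm_monom)
next
  case (Suc r)
  define A B T where "A = node_poly \<beta> r" and "B = pfrac_numer \<beta> s r"
    and "T j = twisted_pderiv_pow A B j (of_nat n) (monom 1 l)" for j
  define t where "t j = of_nat (k choose j) * (A ^ (k - j) * T j * [:-\<beta> r, 1:] ^ j
    * [:\<Prod>i<k - j. of_nat n - of_nat i + s r:])" for j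
  define Q where "Q = (\<Prod>i<r. 1 + norm (\<beta> i))"
  define M where "M = fact k * real (Suc k) ^ r * 2 ^ l * 2 ^ (Suc r * (n + S)) * (Q * (1 + norm (\<beta> r))) ^ k"
  \<comment> \<open>Leibniz rule for the factorisation into node_poly \<beta> r and the last linear factor, on which
    the twisted derivative acts by scalars.\<close>
  have "twisted_pderiv_pow (node_poly \<beta> (Suc r)) (pfrac_numer \<beta> s (Suc r)) k (of_nat n) (monom 1 l)
      = (\<Sum>j\<le>k. t j)"
    using twisted_pderiv_pow_mult[of A "[:-\<beta> r, 1:]" B "[:s r:]" k "of_nat n" "monom 1 l" 1]
    by (simp add: node_poly_Suc pfrac_numer_Suc twisted_pderiv_pow_linear A_def B_def T_def t_def)
  then have "l1_norm (twisted_pderiv_pow (node_poly \<beta> (Suc r)) (pfrac_numer \<beta> s (Suc r)) k (of_nat n) (monom 1 l))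
      \<le> (\<Sum>j\<le>k. l1_norm (t j))"
    by (simp add: l1_norm_sum)
  also have "\<dots> \<le> (\<Sum>j\<le>k. M)"
  proof (rule sum_mono)
    fix j assume "j \<in> {..k}"
    then show "l1_norm (t j) \<le> M"
      using Suc unfolding t_def M_def
      by (intro l1_norm_leibniz_term_le) (simp_all add: A_def B_def T_def Q_def l1_norm_node_poly)
  qed
  also have "\<dots> = fact k * real (Suc k) ^ Suc r * 2 ^ l * 2 ^ (Suc r * (n + S)) * (\<Prod>i<Suc r. 1 + norm (\<beta> i)) ^ k"
    by (simp add: M_def Q_def mult_ac)
  finally show ?case .
qed

section \<open>Archimedean absolute values and logarithmic bounds\<close>

definition v_exponent :: "complex set \<Rightarrow> (complex \<Rightarrow> complex) \<Rightarrow> real" where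
  "v_exponent K \<iota> = real (local_degree K \<iota>) / real (nf_degree K)"

lemma v_exponent_nonneg: "0 \<le> v_exponent K \<iota>"
  by (simp add: v_exponent_def)

lemma abs_v_eq: "abs_v K \<iota> x = norm (\<iota> x) powr v_exponent K \<iota>"
  by (simp add: abs_v_def v_exponent_def)

lemma h_v_eq: "h_v K \<iota> x = v_exponent K \<iota> * ln (max 1 (norm (\<iota> x)))"
proof (cases "norm (\<iota> x) \<le> 1")
  case True
  then show ?thesis
    by (simp add: h_v_def abs_v_eq powr_le1 v_exponent_nonneg)
next
  case False
  then show ?thesis
    by (simp add: h_v_def abs_v_eq ge_one_powr_ge_zero v_exponent_nonneg ln_powr)
qed

lemma poly_norm_v_nonneg: "0 \<le> poly_norm_v K \<iota> p"
proof -
  have "abs_v K \<iota> (coeff p 0) \<le> poly_norm_v K \<iota> p"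
    unfolding poly_norm_v_def by (rule Max_ge) auto
  then show ?thesis
    unfolding abs_v_def by (meson order_trans powr_ge_zero)
qed

lemma ln_Max_poly_norm_v_le:
  assumes "finite L" and "L \<noteq> {}" and "1 \<le> B"
    and "\<And>l k. l \<in> L \<Longrightarrow> norm (\<iota> (coeff (p l) k)) \<le> B"
  shows "ln (Max ((\<lambda>l. poly_norm_v K \<iota> (p l)) ` L)) \<le> v_exponent K \<iota> * ln B"
proof -
  define e where "e = v_exponent K \<iota>"
  define M where "M = Max ((\<lambda>l. poly_norm_v K \<iota> (p l)) ` L)"
  have "poly_norm_v K \<iota> (p l) \<le> B powr e" if "l \<in> L" for l
    unfolding poly_norm_v_def abs_v_eq e_def[symmetric] using assms(4)[OF that]
    by (auto intro!: powr_mono2 simp: e_def v_exponent_nonneg)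
  then have "M \<le> B powr e"
    using assms(1,2) by (simp add: M_def)
  moreover have "0 \<le> M"
    using assms(1,2) poly_norm_v_nonneg by (auto simp: M_def Max_ge_iff)
  moreover have "0 \<le> e * ln B" and "ln (B powr e) = e * ln B"
    using assms(3) by (simp_all add: e_def v_exponent_nonneg ln_powr)
  ultimately have "ln M \<le> e * ln B"
    by (cases "M = 0") (auto dest: ln_mono)
  then show ?thesis
    by (simp add: M_def e_def)
qed

lemma sublinear_remainder:
  assumes "0 < C" and "0 < R" and "\<And>n. f n \<le> e * ln (C * real (Suc n) ^ d * R ^ n)"
  shows "\<exists>g :: nat \<Rightarrow> real. ((\<lambda>n. g n / real n) \<longlongrightarrow> 0) sequentially \<and>
    (\<forall>\<^sub>F n in sequentially. f n \<le> real n * (e * ln R) + g n)"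
proof (intro exI conjI)
  show "((\<lambda>n. e * (ln C + real d * ln (real (Suc n))) / real n) \<longlongrightarrow> 0) sequentially"
    by real_asymp
  show "\<forall>\<^sub>F n in sequentially. f n \<le> real n * (e * ln R) + e * (ln C + real d * ln (real (Suc n)))"
    using assms by (intro always_eventually allI) (simp add: ln_mult ln_realpow algebra_simps)
qed

lemma ln_Max_poly_norm_v_le_sublinear:
  assumes "finite L" and "L \<noteq> {}" and "1 \<le> C" and "1 \<le> R"
    and "\<And>n l k. l \<in> L \<Longrightarrow> norm (\<iota> (coeff (p n l) k)) \<le> C * real (Suc n) ^ d * R ^ n"
  shows "\<exists>g :: nat \<Rightarrow> real. ((\<lambda>n. g n / real n) \<longlongrightarrow> 0) sequentially \<and>
    (\<forall>\<^sub>F n in sequentially.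
      ln (Max ((\<lambda>l. poly_norm_v K \<iota> (p n l)) ` L)) \<le> real n * (v_exponent K \<iota> * ln R) + g n)"
proof (rule sublinear_remainder)
  have "1 \<le> C * real (Suc n) ^ d * R ^ n" for n
    using assms(3,4) by (intro mult_ge1_I one_le_power) auto
  then show "ln (Max ((\<lambda>l. poly_norm_v K \<iota> (p n l)) ` L)) \<le> v_exponent K \<iota> * ln (C * real (Suc n) ^ d * R ^ n)" for n
    using assms by (intro ln_Max_poly_norm_v_le) auto
qed (use assms(3,4) in auto)

lemma two_power_mult_prod_le:
  "2 ^ m * (\<Prod>i<m. 1 + norm (x i)) \<le> 4 ^ m * (\<Prod>i<m. max 1 (norm (x i)))"
proof -
  have "(\<Prod>i<m. 1 + norm (x i)) \<le> (\<Prod>i<m. 2 * max 1 (norm (x i)))"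
    by (intro prod_mono) auto
  moreover have "(4::real) ^ m = 2 ^ m * 2 ^ m"
    by (simp flip: power_mult_distrib)
  ultimately show ?thesis
    by (simp add: prod.distrib)
qed

section \<open>Transport along the embedding of the number field\<close>

locale nf_embedding =
  fixes K :: "complex set" and \<iota> :: "complex \<Rightarrow> complex"
  assumes number_field: "number_field K" and embedding: "field_embedding K \<iota>"
begin

lemma zero_in_K: "0 \<in> K" and one_in_K: "1 \<in> K"
  and add_in_K: "x \<in> K \<Longrightarrow> y \<in> K \<Longrightarrow> x + y \<in> K"
  and diff_in_K: "x \<in> K \<Longrightarrow> y \<in> K \<Longrightarrow> x - y \<in> K"
  and mult_in_K: "x \<in> K \<Longrightarrow> y \<in> K \<Longrightarrow> x * y \<in> K"
  and inverse_in_K: "x \<in> K \<Longrightarrow> inverse x \<in> K"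
  using number_field unfolding number_field_def by (auto simp del: inverse_nonzero_iff_nonzero)

lemma emb_add: "x \<in> K \<Longrightarrow> y \<in> K \<Longrightarrow> \<iota> (x + y) = \<iota> x + \<iota> y"
  and emb_mult: "x \<in> K \<Longrightarrow> y \<in> K \<Longrightarrow> \<iota> (x * y) = \<iota> x * \<iota> y"
  and emb_1: "\<iota> 1 = 1"
  using embedding unfolding field_embedding_def by auto

lemma emb_0: "\<iota> 0 = 0"
  using emb_add[OF zero_in_K zero_in_K] by simp

lemma minus_in_K: "x \<in> K \<Longrightarrow> -x \<in> K"
  using diff_in_K[OF zero_in_K] by fastforce

lemma emb_minus: "x \<in> K \<Longrightarrow> \<iota> (-x) = - \<iota> x"
  using emb_add[of x "-x"] minus_in_K emb_0 by (simp add: add_eq_0_iff)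

lemma emb_diff: "x \<in> K \<Longrightarrow> y \<in> K \<Longrightarrow> \<iota> (x - y) = \<iota> x - \<iota> y"
  using emb_add[of x "-y"] minus_in_K emb_minus by simp

lemma of_nat_in_K: "of_nat k \<in> K"
  by (induction k) (simp_all add: zero_in_K one_in_K add_in_K)

lemma emb_of_nat: "\<iota> (of_nat k) = of_nat k"
  by (induction k) (simp_all add: emb_0 emb_1 emb_add one_in_K of_nat_in_K)

lemma emb_inverse: "x \<in> K \<Longrightarrow> \<iota> (inverse x) = inverse (\<iota> x)"
  using emb_mult[of x "inverse x"] inverse_in_K emb_1 emb_0
  by (cases "x = 0") (simp_all add: inverse_unique)

lemma inj_on_emb: "inj_on \<iota> K"
proof (rule inj_onI)
  fix x y assume "x \<in> K" "y \<in> K" "\<iota> x = \<iota> y"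
  then have "\<iota> (x - y) * \<iota> (inverse (x - y)) = 0"
    by (simp add: emb_diff)
  then show "x = y"
    using emb_mult[of "x - y" "inverse (x - y)"] emb_1 diff_in_K inverse_in_K \<open>x \<in> K\<close> \<open>y \<in> K\<close>
    by (cases "x = y") auto
qed

lemma sum_in_K: "(\<And>i. i \<in> S \<Longrightarrow> f i \<in> K) \<Longrightarrow> sum f S \<in> K"
  and emb_sum: "(\<And>i. i \<in> S \<Longrightarrow> f i \<in> K) \<Longrightarrow> \<iota> (sum f S) = (\<Sum>i\<in>S. \<iota> (f i))"
  by (induction S rule: infinite_finite_induct) (simp_all add: zero_in_K emb_0 add_in_K emb_add)

definition K_polys :: "complex poly set" where
  "K_polys = {p. \<forall>k. coeff p k \<in> K}"

lemma coeff_map_poly_emb: "coeff (map_poly \<iota> p) k = \<iota> (coeff p k)"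
  by (simp add: coeff_map_poly emb_0)

lemma add_in_K_polys: "p \<in> K_polys \<Longrightarrow> q \<in> K_polys \<Longrightarrow> p + q \<in> K_polys"
  and map_poly_emb_add: "p \<in> K_polys \<Longrightarrow> q \<in> K_polys \<Longrightarrow> map_poly \<iota> (p + q) = map_poly \<iota> p + map_poly \<iota> q"
  unfolding K_polys_def by (auto intro!: poly_eqI simp: coeff_map_poly_emb add_in_K emb_add)

lemma mult_in_K_polys: "p \<in> K_polys \<Longrightarrow> q \<in> K_polys \<Longrightarrow> p * q \<in> K_polys"
  and map_poly_emb_mult: "p \<in> K_polys \<Longrightarrow> q \<in> K_polys \<Longrightarrow> map_poly \<iota> (p * q) = map_poly \<iota> p * map_poly \<iota> q"
  unfolding K_polys_def
  by (auto intro!: poly_eqI simp: coeff_map_poly_emb coeff_mult sum_in_K emb_sum mult_in_K emb_mult)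

lemma smult_in_K_polys: "c \<in> K \<Longrightarrow> p \<in> K_polys \<Longrightarrow> smult c p \<in> K_polys"
  and map_poly_emb_smult: "c \<in> K \<Longrightarrow> p \<in> K_polys \<Longrightarrow> map_poly \<iota> (smult c p) = smult (\<iota> c) (map_poly \<iota> p)"
  unfolding K_polys_def by (auto intro!: poly_eqI simp: coeff_map_poly_emb mult_in_K emb_mult)

lemma pderiv_in_K_polys: "p \<in> K_polys \<Longrightarrow> pderiv p \<in> K_polys"
  and map_poly_emb_pderiv: "p \<in> K_polys \<Longrightarrow> map_poly \<iota> (pderiv p) = pderiv (map_poly \<iota> p)"
  unfolding K_polys_def
  by (auto intro!: poly_eqI simp: coeff_map_poly_emb coeff_pderiv mult_in_K emb_mult of_nat_in_K emb_of_nat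
      simp flip: of_nat_Suc)

lemma linear_in_K_polys: "x \<in> K \<Longrightarrow> [:-x, 1:] \<in> K_polys"
  by (auto simp: K_polys_def coeff_pCons minus_in_K one_in_K zero_in_K split: nat.split)

lemma map_poly_emb_linear: "x \<in> K \<Longrightarrow> map_poly \<iota> [:-x, 1:] = [:-\<iota> x, 1:]"
  by (simp add: map_poly_pCons emb_minus emb_0 emb_1)

lemma monom_1_in_K_polys: "monom 1 l \<in> K_polys"
  and map_poly_emb_monom_1: "map_poly \<iota> (monom 1 l) = monom 1 l"
  unfolding K_polys_def by (simp_all add: coeff_monom one_in_K zero_in_K map_poly_monom emb_0 emb_1)

lemma one_in_K_polys: "1 \<in> K_polys"
  by (simp add: K_polys_def coeff_1 one_in_K zero_in_K)

lemma prod_in_K_polys: "(\<And>i. i \<in> S \<Longrightarrow> f i \<in> K_polys) \<Longrightarrow> prod f S \<in> K_polys"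
  by (induction S rule: infinite_finite_induct) (simp_all add: one_in_K_polys mult_in_K_polys)

lemma map_poly_emb_prod:
  "(\<And>i. i \<in> S \<Longrightarrow> f i \<in> K_polys) \<Longrightarrow> map_poly \<iota> (prod f S) = (\<Prod>i\<in>S. map_poly \<iota> (f i))"
  by (induction S rule: infinite_finite_induct) (simp_all add: emb_1 map_poly_emb_mult prod_in_K_polys)

lemma twisted_pderiv_in_K_polys:
  "A \<in> K_polys \<Longrightarrow> B \<in> K_polys \<Longrightarrow> c \<in> K \<Longrightarrow> G \<in> K_polys \<Longrightarrow> twisted_pderiv A B c G \<in> K_polys"
  by (simp add: twisted_pderiv_def add_in_K_polys mult_in_K_polys smult_in_K_polys pderiv_in_K_polys)

lemma map_poly_emb_twisted_pderiv:
  "A \<in> K_polys \<Longrightarrow> B \<in> K_polys \<Longrightarrow> c \<in> K \<Longrightarrow> G \<in> K_polys \<Longrightarrow>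
    map_poly \<iota> (twisted_pderiv A B c G)
    = twisted_pderiv (map_poly \<iota> A) (map_poly \<iota> B) (\<iota> c) (map_poly \<iota> G)"
  by (simp add: twisted_pderiv_def add_in_K_polys mult_in_K_polys smult_in_K_polys pderiv_in_K_polys
      map_poly_emb_add map_poly_emb_mult map_poly_emb_smult map_poly_emb_pderiv)

lemma twisted_pderiv_pow_in_K_polys:
  assumes "A \<in> K_polys" "B \<in> K_polys" "c \<in> K" "G \<in> K_polys"
  shows "twisted_pderiv_pow A B k c G \<in> K_polys"
  by (induction k) (simp_all add: assms twisted_pderiv_in_K_polys diff_in_K of_nat_in_K)

lemma map_poly_emb_twisted_pderiv_pow:
  assumes "A \<in> K_polys" "B \<in> K_polys" "c \<in> K" "G \<in> K_polys"
  shows "map_poly \<iota> (twisted_pderiv_pow A B k c G)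
    = twisted_pderiv_pow (map_poly \<iota> A) (map_poly \<iota> B) k (\<iota> c) (map_poly \<iota> G)"
  by (induction k) (simp_all add: assms map_poly_emb_twisted_pderiv twisted_pderiv_pow_in_K_polys
      diff_in_K of_nat_in_K emb_diff emb_of_nat)

lemma map_poly_emb_P_poly:
  assumes "\<forall>i<m. \<alpha> i \<in> K" and "inj_on \<alpha> {..<m}" and "b \<in> K_polys" and "degree b < m"
  defines "\<beta> \<equiv> \<lambda>i. \<iota> (\<alpha> i)"
  shows "map_poly \<iota> (P_poly (node_poly \<alpha> m) b n l) = smult (1 / fact n)
    (twisted_pderiv_pow (node_poly \<beta> m)
      (pfrac_numer \<beta> (\<lambda>i. poly (map_poly \<iota> b) (\<beta> i) / poly (pderiv (node_poly \<beta> m)) (\<beta> i)) m)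
      n (of_nat n) (monom 1 l))"
proof -
  have node: "node_poly \<alpha> m \<in> K_polys"
    using assms(1) by (auto simp: node_poly_def linear_in_K_polys intro!: prod_in_K_polys)
  have "map_poly \<iota> (node_poly \<alpha> m) = (\<Prod>i<m. map_poly \<iota> [:-\<alpha> i, 1:])"
    unfolding node_poly_def using assms(1) by (intro map_poly_emb_prod) (simp add: linear_in_K_polys)
  also have "\<dots> = node_poly \<beta> m"
    using assms(1) by (simp add: node_poly_def \<beta>_def map_poly_emb_linear)
  finally have map_node: "map_poly \<iota> (node_poly \<alpha> m) = node_poly \<beta> m" .
  have "inj_on \<beta> {..<m}"
    using assms(1,2) inj_on_emb unfolding \<beta>_def inj_on_def by auto
  moreover have "degree (map_poly \<iota> b) < m"
    using map_poly_degree_leq[of \<iota> b] assms(4) by linarith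
  ultimately have pfrac: "map_poly \<iota> b = pfrac_numer \<beta>
      (\<lambda>i. poly (map_poly \<iota> b) (\<beta> i) / poly (pderiv (node_poly \<beta> m)) (\<beta> i)) m"
    by (simp add: pfrac_numer_residues)
  have "fact n \<in> K" and "\<iota> (fact n) = fact n"
    using of_nat_in_K[of "fact n"] emb_of_nat[of "fact n"] by simp_all
  then have "1 / fact n \<in> K" and "\<iota> (1 / fact n) = 1 / fact n"
    unfolding inverse_eq_divide[symmetric] by (simp_all add: inverse_in_K emb_inverse)
  moreover have "node_poly \<alpha> m \<noteq> 0"
    by (simp add: node_poly_def)
  ultimately show ?thesis
    using node map_node assms(3) pfrac
    by (simp add: P_poly_eq_twisted_pderiv_pow map_poly_emb_smult twisted_pderiv_pow_in_K_polys
        map_poly_emb_twisted_pderiv_pow of_nat_in_K monom_1_in_K_polys emb_of_nat map_poly_emb_monom_1)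
qed

lemma norm_emb_coeff_P_poly_le:
  assumes "\<forall>i<m. \<alpha> i \<in> K" and "inj_on \<alpha> {..<m}" and "b \<in> K_polys" and "degree b < m"
  obtains C where "1 \<le> C" and "\<And>n l k. l < m \<Longrightarrow> norm (\<iota> (coeff (P_poly (node_poly \<alpha> m) b n l) k))
    \<le> C * real (Suc n) ^ m * (4 ^ m * (\<Prod>i<m. max 1 (norm (\<iota> (\<alpha> i))))) ^ n"
proof -
  define \<beta> where "\<beta> = (\<lambda>i. \<iota> (\<alpha> i))"
  define s where "s = (\<lambda>i. poly (map_poly \<iota> b) (\<beta> i) / poly (pderiv (node_poly \<beta> m)) (\<beta> i))"
  define T where "T n l = twisted_pderiv_pow (node_poly \<beta> m) (pfrac_numer \<beta> s m) n (of_nat n) (monom 1 l)" for n l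
  define Q where "Q = (\<Prod>i<m. 1 + norm (\<beta> i))"
  obtain S :: nat where S: "\<forall>i<m. norm (s i) \<le> real S"
  proof
    show "\<forall>i<m. norm (s i) \<le> real (nat \<lceil>\<Sum>i<m. norm (s i)\<rceil>)"
      by (auto intro!: order_trans[OF member_le_sum real_nat_ceiling_ge])
  qed
  have Q: "2 ^ m * Q \<le> 4 ^ m * (\<Prod>i<m. max 1 (norm (\<beta> i)))"
    unfolding Q_def by (rule two_power_mult_prod_le)
  have "norm (\<iota> (coeff (P_poly (node_poly \<alpha> m) b n l) k))
      \<le> 2 ^ m * 2 ^ (m * S) * real (Suc n) ^ m * (4 ^ m * (\<Prod>i<m. max 1 (norm (\<beta> i)))) ^ n"
    if "l < m" for n l k
  proof -
    have "\<iota> (coeff (P_poly (node_poly \<alpha> m) b n l) k) = coeff (T n l) k / fact n"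
      by (simp add: map_poly_emb_P_poly[OF assms] T_def \<beta>_def s_def flip: coeff_map_poly_emb)
    then have "norm (\<iota> (coeff (P_poly (node_poly \<alpha> m) b n l) k)) \<le> 1 / fact n * l1_norm (T n l)"
      using norm_coeff_le_l1_norm[of "T n l" k] by (simp add: norm_divide divide_right_mono)
    also have "\<dots> \<le> 1 / fact n * (fact n * real (Suc n) ^ m * 2 ^ l * 2 ^ (m * (n + S)) * Q ^ n)"
      using l1_norm_twisted_pderiv_pow_le[OF S] unfolding Q_def T_def by (intro mult_left_mono) simp_all
    also have "\<dots> = 2 ^ l * 2 ^ (m * S) * real (Suc n) ^ m * (2 ^ m * Q) ^ n"
      by (simp add: power_add power_mult power_mult_distrib algebra_simps)
    also have "\<dots> \<le> 2 ^ m * 2 ^ (m * S) * real (Suc n) ^ m * (4 ^ m * (\<Prod>i<m. max 1 (norm (\<beta> i)))) ^ n"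
      using that
      by (intro mult_mono[OF _ power_mono[OF Q]] mult_right_mono power_increasing) (simp_all add: Q_def prod_nonneg)
    finally show ?thesis .
  qed
  moreover have "(1::real) \<le> 2 ^ m * 2 ^ (m * S)"
    by (simp add: one_le_power flip: power_add)
  ultimately show thesis
    using that[of "2 ^ m * 2 ^ (m * S)"] by (simp add: \<beta>_def)
qed

lemma v_exponent_mult_ln_eq:
  "v_exponent K \<iota> * ln (4 ^ m * (\<Prod>i<m. max 1 (norm (\<iota> (\<alpha> i)))))
    = (\<Sum>i<m. h_v K \<iota> (\<alpha> i)) + real m * ln (abs_v K \<iota> 4)"
proof -
  have "\<iota> 4 = 4"
    using emb_of_nat[of 4] by simp
  moreover have "ln (4 ^ m * (\<Prod>i<m. max 1 (norm (\<iota> (\<alpha> i)))))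
      = real m * ln 4 + (\<Sum>i<m. ln (max 1 (norm (\<iota> (\<alpha> i)))))"
    by (subst ln_mult) (auto simp: ln_prod ln_realpow prod_pos)
  ultimately show ?thesis
    by (simp add: h_v_eq abs_v_eq ln_powr sum_distrib_left algebra_simps)
qed

end

theorem lemma4p11:
  fixes K :: "complex set" and \<iota> :: "complex \<Rightarrow> complex"
    and m :: nat and a b :: "complex poly" and \<alpha> :: "nat \<Rightarrow> complex"
  assumes "m \<ge> 2"
    and "number_field K"
    and "field_embedding K \<iota>"
    and "\<forall>k. coeff a k \<in> K" and "\<forall>k. coeff b k \<in> K"
    and "degree a = m" and "lead_coeff a = 1"
    and "degree b \<le> m - 1"
    and "a = (\<Prod>i<m. [:- \<alpha> i, 1:])"
    and "\<forall>i<m. \<alpha> i \<in> K"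
    and "inj_on \<alpha> {..<m}"
    and "\<forall>i<m. poly b (\<alpha> i) / poly (pderiv a) (\<alpha> i) \<in> \<rat>"
    and "\<forall>i<m. \<not> (\<exists>k::int. k \<le> -1 \<and> poly b (\<alpha> i) / poly (pderiv a) (\<alpha> i) = of_int k)"
    and "\<not> (\<exists>k::int. k < -1 \<and> coeff b (m - 1) = of_int k)"
  shows "\<exists>g :: nat \<Rightarrow> real. ((\<lambda>n. g n / real n) \<longlongrightarrow> 0) sequentially \<and>
     (\<forall>\<^sub>F n in sequentially.
        ln (Max ((\<lambda>l. poly_norm_v K \<iota> (P_poly a b n l)) ` {0..m - 1}))
          \<le> real n * ((\<Sum>i<m. h_v K \<iota> (\<alpha> i)) + real m * ln (abs_v K \<iota> 4)) + g n)"
proof -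
  interpret nf_embedding K \<iota>
    using assms(2,3) by unfold_locales
  define R where "R = 4 ^ m * (\<Prod>i<m. max 1 (norm (\<iota> (\<alpha> i))))"
  have "b \<in> K_polys" and "degree b < m"
    using assms(1,5,8) by (auto simp: K_polys_def)
  then obtain C where "1 \<le> C"
    and "\<And>n l k. l < m \<Longrightarrow> norm (\<iota> (coeff (P_poly a b n l) k)) \<le> C * real (Suc n) ^ m * R ^ n"
    using norm_emb_coeff_P_poly_le[OF assms(10,11)] unfolding R_def assms(9) node_poly_def by blast
  moreover have "1 \<le> R"
    unfolding R_def by (intro mult_ge1_I prod_ge_1 one_le_power) auto
  ultimately have "\<exists>g :: nat \<Rightarrow> real. ((\<lambda>n. g n / real n) \<longlongrightarrow> 0) sequentially \<and>
    (\<forall>\<^sub>F n in sequentially.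
      ln (Max ((\<lambda>l. poly_norm_v K \<iota> (P_poly a b n l)) ` {0..m - 1})) \<le> real n * (v_exponent K \<iota> * ln R) + g n)"
    using assms(1) by (intro ln_Max_poly_norm_v_le_sublinear[where d = m]) auto
  then show ?thesis
    unfolding R_def v_exponent_mult_ln_eq .
qed

end
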